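(* Let $\kappa$ be strongly inaccessible and let $A\subseteq\kappa$ be a non-stationary set of regular cardinals unbounded in $\kappa$. Then $\kappa\notin\operatorname{pcf}(A)$.
   Context: $\operatorname{pcf}(A)=\{\operatorname{cf}(\prod A/D): D\text{ an ultrafilter on }A\}$, where $\prod A$ is the set of functions $f$ on $A$ with $f(a)\in a$ and $\prod A/D$ is ordered by $f<_Dg$ iff $\{a\in A:f(a)<g(a)\}\in D$. *)

theory Defs
  imports Main "HOL-Library.Equipollence" "HOL-Library.FuncSet" "HOL-Library.Countable_Set"
begin

text \<open>Ordinals are modelled as elements of an arbitrary well-ordered type 'o;
  the ordinal alpha is identified with the initial segment {..<alpha}.\<close>

definition is_cardinal :: "'o::wellorder \<Rightarrow> bool" where
  "is_cardinal \<alpha> \<longleftrightarrow> (\<forall>\<beta><\<alpha>. \<not> ({..<\<beta>} \<approx> {..<\<alpha>}))"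

definition unbounded_in :: "'o::wellorder set \<Rightarrow> 'o \<Rightarrow> bool" where
  "unbounded_in X \<alpha> \<longleftrightarrow> X \<subseteq> {..<\<alpha>} \<and> (\<forall>\<beta><\<alpha>. \<exists>x\<in>X. \<beta> \<le> x)"

definition regular_cardinal :: "'o::wellorder \<Rightarrow> bool" where
  "regular_cardinal \<alpha> \<longleftrightarrow> is_cardinal \<alpha> \<and> infinite {..<\<alpha>} \<and>
     (\<forall>X. unbounded_in X \<alpha> \<longrightarrow> X \<approx> {..<\<alpha>})"

definition strongly_inaccessible :: "'o::wellorder \<Rightarrow> bool" where
  "strongly_inaccessible \<kappa> \<longleftrightarrow> regular_cardinal \<kappa> \<and> uncountable {..<\<kappa>} \<and>
     (\<forall>\<beta><\<kappa>. Pow {..<\<beta>} \<prec> {..<\<kappa>})"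

definition closed_in :: "'o::wellorder set \<Rightarrow> 'o \<Rightarrow> bool" where
  "closed_in C \<kappa> \<longleftrightarrow> (\<forall>\<gamma><\<kappa>. (\<exists>c\<in>C. c < \<gamma>) \<and> (\<forall>\<delta><\<gamma>. \<exists>c\<in>C. \<delta> < c \<and> c < \<gamma>)
      \<longrightarrow> \<gamma> \<in> C)"

definition club :: "'o::wellorder set \<Rightarrow> 'o \<Rightarrow> bool" where
  "club C \<kappa> \<longleftrightarrow> unbounded_in C \<kappa> \<and> closed_in C \<kappa>"

definition stationary :: "'o::wellorder set \<Rightarrow> 'o \<Rightarrow> bool" where
  "stationary S \<kappa> \<longleftrightarrow> S \<subseteq> {..<\<kappa>} \<and> (\<forall>C. club C \<kappa> \<longrightarrow> S \<inter> C \<noteq> {})"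

definition ultrafilter_on :: "'a set \<Rightarrow> 'a set set \<Rightarrow> bool" where
  "ultrafilter_on A D \<longleftrightarrow> D \<subseteq> Pow A \<and> A \<in> D \<and> {} \<notin> D \<and>
     (\<forall>X\<in>D. \<forall>Y\<in>D. X \<inter> Y \<in> D) \<and>
     (\<forall>X\<in>D. \<forall>Y. X \<subseteq> Y \<and> Y \<subseteq> A \<longrightarrow> Y \<in> D) \<and>
     (\<forall>X. X \<subseteq> A \<longrightarrow> X \<in> D \<or> A - X \<in> D)"

text \<open>prod A = functions f on A with f(a) \<in> a, i.e. f a < a\<close>
definition prodA :: "'o::wellorder set \<Rightarrow> ('o \<Rightarrow> 'o) set" where
  "prodA A = (\<Pi>\<^sub>E a\<in>A. {..<a})"

definition le_mod :: "'o::wellorder set \<Rightarrow> 'o set set \<Rightarrow> ('o \<Rightarrow> 'o) \<Rightarrow> ('o \<Rightarrow> 'o) \<Rightarrow> bool" where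
  "le_mod A D g f \<longleftrightarrow> {a\<in>A. g a \<le> f a} \<in> D"

definition cofinal_mod :: "'o::wellorder set \<Rightarrow> 'o set set \<Rightarrow> ('o \<Rightarrow> 'o) set \<Rightarrow> bool" where
  "cofinal_mod A D F \<longleftrightarrow> F \<subseteq> prodA A \<and> (\<forall>g\<in>prodA A. \<exists>f\<in>F. le_mod A D g f)"

definition cf_is :: "'o::wellorder set \<Rightarrow> 'o set set \<Rightarrow> 'b set \<Rightarrow> bool" where
  "cf_is A D K \<longleftrightarrow> (\<exists>F. cofinal_mod A D F \<and> F \<approx> K) \<and>
     (\<forall>F. cofinal_mod A D F \<longrightarrow> \<not> F \<prec> K)"

definition pcf :: "'o::wellorder set \<Rightarrow> 'o set" where
  "pcf A = {\<mu>. is_cardinal \<mu> \<and> (\<exists>D. ultrafilter_on A D \<and> cf_is A D {..<\<mu>})}"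

end

theory Submission
  imports Defs
begin

text \<open>Let \<open>D\<close> be an ultrafilter on \<open>A\<close>. If \<open>D\<close> contains a bounded set \<open>A \<inter> {..g}\<close>, then
  \<open>\<Prod>A/D\<close> is determined by the coordinates below \<open>g\<close>, so it has a cofinal family of size at
  most \<open>2\<^bsup>|g|\<^esup> < \<kappa>\<close>. Otherwise \<open>D\<close> contains every tail of \<open>A\<close>. Take a club \<open>C\<close> disjoint from
  \<open>A\<close>; for \<open>a \<in> A\<close> the set \<open>C \<inter> a\<close> is bounded by some \<open>d a < a\<close>. Given \<open>\<langle>f\<^sub>i : i < \<kappa>\<rangle>\<close>, the
  regularity of \<open>a\<close> yields \<open>g a < a\<close> above all \<open>f\<^sub>i a\<close> with \<open>i \<le> d a\<close>. For any \<open>i\<close> pick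
  \<open>c \<in> C\<close> above \<open>i\<close>: on the tail above \<open>c\<close> we have \<open>i \<le> c \<le> d a\<close>, hence \<open>f\<^sub>i < g\<close> there, so no
  family of length \<open>\<kappa>\<close> is cofinal.\<close>

lemma atMost_eqpoll_lessThan:
  fixes d :: "'a::order"
  assumes "infinite {..d}"
  shows "{..d} \<approx> {..<d}"
proof -
  have "{..d} = insert d {..<d}" by auto
  with assms show ?thesis by (simp add: infinite_insert_eqpoll)
qed

lemma Pow_eqpoll_Pow: "A \<approx> B \<Longrightarrow> Pow A \<approx> Pow B"
  unfolding eqpoll_def by (blast intro: bij_betw_Pow)

lemma Pow_Times_self_eqpoll:
  assumes "infinite A"
  shows "Pow (A \<times> A) \<approx> Pow A"
proof -
  have "A \<times> A \<approx> A"
    using assms card_of_Times_same_infinite eqpoll_iff_card_of_ordIso by blast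
  then show ?thesis by (rule Pow_eqpoll_Pow)
qed

lemma strongly_inaccessible_Pow_Times_lesspoll:
  fixes \<kappa> g :: "'o::wellorder"
  assumes "strongly_inaccessible \<kappa>" "g < \<kappa>"
  shows "Pow ({..g} \<times> {..g}) \<prec> {..<\<kappa>}"
proof (cases "finite {..g}")
  case True
  moreover have "infinite {..<\<kappa>}"
    using assms(1) unfolding strongly_inaccessible_def regular_cardinal_def by blast
  ultimately show ?thesis by (intro finite_lesspoll_infinite) auto
next
  case False
  then have "Pow ({..g} \<times> {..g}) \<approx> Pow {..g}" by (rule Pow_Times_self_eqpoll)
  also have "Pow {..g} \<approx> Pow {..<g}"
    using False by (intro Pow_eqpoll_Pow atMost_eqpoll_lessThan)
  also have "Pow {..<g} \<prec> {..<\<kappa>}"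
    using assms unfolding strongly_inaccessible_def by blast
  finally show ?thesis .
qed

lemma ultrafilter_onD:
  assumes "ultrafilter_on A D"
  shows "D \<subseteq> Pow A" and "{} \<notin> D" and "X \<in> D \<Longrightarrow> Y \<in> D \<Longrightarrow> X \<inter> Y \<in> D"
    and "X \<in> D \<Longrightarrow> X \<subseteq> Y \<Longrightarrow> Y \<subseteq> A \<Longrightarrow> Y \<in> D"
    and "X \<subseteq> A \<Longrightarrow> X \<notin> D \<Longrightarrow> A - X \<in> D"
  using assms unfolding ultrafilter_on_def by simp_all blast

definition prodA_varying_on :: "'o::wellorder set \<Rightarrow> 'o set \<Rightarrow> ('o \<Rightarrow> 'o) \<Rightarrow> ('o \<Rightarrow> 'o) set" where
  "prodA_varying_on A B h = {f \<in> prodA A. \<forall>a\<in>A - B. f a = h a}"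

lemma cofinal_mod_prodA_varying_on:
  assumes "ultrafilter_on A D" "B \<in> D" "h \<in> prodA A"
  shows "cofinal_mod A D (prodA_varying_on A B h)"
  unfolding cofinal_mod_def
proof (intro conjI ballI)
  show "prodA_varying_on A B h \<subseteq> prodA A" unfolding prodA_varying_on_def by blast
next
  fix g assume g: "g \<in> prodA A"
  have B: "B \<subseteq> A" using ultrafilter_onD(1)[OF assms(1)] assms(2) by blast
  define f where "f = (\<lambda>a. if a \<in> B then g a else h a)"
  have "f \<in> prodA A"
    using g assms(3) B unfolding f_def prodA_def PiE_iff extensional_def by auto
  then have "f \<in> prodA_varying_on A B h" unfolding prodA_varying_on_def f_def by auto
  moreover have "B \<subseteq> {a\<in>A. g a \<le> f a}" using B unfolding f_def by auto
  then have "le_mod A D g f"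
    unfolding le_mod_def by (rule ultrafilter_onD(4)[OF assms(1,2)]) blast
  ultimately show "\<exists>f\<in>prodA_varying_on A B h. le_mod A D g f" by blast
qed

lemma prodA_varying_on_lepoll:
  fixes g :: "'o::wellorder"
  assumes "B \<subseteq> A" "\<forall>a\<in>B. a \<le> g"
  shows "prodA_varying_on A B h \<lesssim> Pow ({..g} \<times> {..g})"
  unfolding lepoll_def
proof (intro exI conjI)
  let ?graph = "\<lambda>f. {(a, f a) | a. a \<in> B}"
  show "inj_on ?graph (prodA_varying_on A B h)"
  proof (rule inj_onI, rule ext)
    fix f1 f2 a
    assume f: "f1 \<in> prodA_varying_on A B h" "f2 \<in> prodA_varying_on A B h" "?graph f1 = ?graph f2"
    show "f1 a = f2 a"
    proof (cases "a \<in> B")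
      case True
      then have "(a, f1 a) \<in> ?graph f2" using f(3) by blast
      then show ?thesis by auto
    next
      case False
      have "f1 \<in> prodA A" "f2 \<in> prodA A" "a \<in> A \<Longrightarrow> f1 a = f2 a"
        using f(1,2) False unfolding prodA_varying_on_def by auto
      then show ?thesis unfolding prodA_def using PiE_arb by metis
    qed
  qed
  show "?graph ` prodA_varying_on A B h \<subseteq> Pow ({..g} \<times> {..g})"
  proof (intro image_subsetI PowI subsetI)
    fix f p assume f: "f \<in> prodA_varying_on A B h" and "p \<in> ?graph f"
    then obtain a where a: "a \<in> B" "p = (a, f a)" by blast
    have "f a < a" using f a(1) assms(1) unfolding prodA_varying_on_def prodA_def by auto
    then show "p \<in> {..g} \<times> {..g}" using a assms(2) by force
  qed
qed

lemma small_cofinal_family_if_bounded_set_in_ultrafilter: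
  fixes \<kappa> g :: "'o::wellorder"
  assumes "strongly_inaccessible \<kappa>" "g < \<kappa>"
    and "ultrafilter_on A D" "{a\<in>A. a \<le> g} \<in> D" "prodA A \<noteq> {}"
  shows "\<exists>F. cofinal_mod A D F \<and> F \<prec> {..<\<kappa>}"
proof -
  obtain h where h: "h \<in> prodA A" using assms(5) by blast
  let ?F = "prodA_varying_on A {a\<in>A. a \<le> g} h"
  have "?F \<lesssim> Pow ({..g} \<times> {..g})" by (rule prodA_varying_on_lepoll) auto
  also have "Pow ({..g} \<times> {..g}) \<prec> {..<\<kappa>}"
    using assms(1,2) by (rule strongly_inaccessible_Pow_Times_lesspoll)
  finally have "?F \<prec> {..<\<kappa>}" .
  moreover have "cofinal_mod A D ?F" using assms(3,4) h by (rule cofinal_mod_prodA_varying_on)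
  ultimately show ?thesis by blast
qed

lemma regular_cardinal_nonzero: "regular_cardinal a \<Longrightarrow> \<exists>x. x < a"
  unfolding regular_cardinal_def by (metis ex_in_conv finite.emptyI lessThan_iff)

lemma regular_cardinal_atMost_lesspoll:
  fixes a d :: "'o::wellorder"
  assumes "regular_cardinal a" "d < a"
  shows "{..d} \<prec> {..<a}"
proof -
  have "\<not> {..d} \<approx> {..<a}"
  proof
    assume eq: "{..d} \<approx> {..<a}"
    moreover have "infinite {..<a}" using assms(1) unfolding regular_cardinal_def by blast
    ultimately have "infinite {..d}" using eqpoll_finite_iff by blast
    then have "{..<d} \<approx> {..<a}"
      using eq atMost_eqpoll_lessThan eqpoll_sym eqpoll_trans by blast
    then show False using assms unfolding regular_cardinal_def is_cardinal_def by blast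
  qed
  moreover have "{..d} \<lesssim> {..<a}" using assms(2) by (intro subset_imp_lepoll) auto
  ultimately show ?thesis unfolding lesspoll_def by blast
qed

lemma regular_cardinal_lesspoll_bounded:
  fixes a :: "'o::wellorder"
  assumes "regular_cardinal a" "V \<subseteq> {..<a}" "V \<prec> {..<a}"
  shows "\<exists>b<a. \<forall>v\<in>V. v < b"
proof (rule ccontr)
  assume "\<not> ?thesis"
  then have "unbounded_in V a"
    using assms(2) unfolding unbounded_in_def by (meson not_le)
  then have "V \<approx> {..<a}" using assms(1) unfolding regular_cardinal_def by blast
  with assms(3) show False unfolding lesspoll_def by blast
qed

lemma prodA_dominates_short_families:
  fixes A :: "'o::wellorder set"
  assumes "\<forall>a\<in>A. regular_cardinal a" "\<forall>a\<in>A. d a < a" "\<forall>a\<in>A. \<forall>i\<le>d a. h i a < a"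
  shows "\<exists>g\<in>prodA A. \<forall>a\<in>A. \<forall>i\<le>d a. h i a < g a"
proof -
  have "\<exists>b<a. \<forall>i\<le>d a. h i a < b" if "a \<in> A" for a
  proof -
    have "(\<lambda>i. h i a) ` {..d a} \<lesssim> {..d a}" by (rule image_lepoll)
    also have "{..d a} \<prec> {..<a}"
      using assms(1,2) that by (simp add: regular_cardinal_atMost_lesspoll)
    finally have "(\<lambda>i. h i a) ` {..d a} \<prec> {..<a}" .
    moreover have "(\<lambda>i. h i a) ` {..d a} \<subseteq> {..<a}" using assms(3) that by auto
    ultimately have "\<exists>b<a. \<forall>v\<in>(\<lambda>i. h i a) ` {..d a}. v < b"
      using assms(1) that by (intro regular_cardinal_lesspoll_bounded) auto
    then show ?thesis by auto
  qed
  then obtain b where b: "\<forall>a\<in>A. b a < a \<and> (\<forall>i\<le>d a. h i a < b a)" by metis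
  then have "restrict b A \<in> prodA A" unfolding prodA_def by auto
  moreover have "\<forall>a\<in>A. \<forall>i\<le>d a. h i a < restrict b A a" using b by simp
  ultimately show ?thesis by blast
qed

lemma closed_in_bounded_below_nonmember:
  fixes \<kappa> a :: "'o::wellorder"
  assumes "closed_in C \<kappa>" "a < \<kappa>" "a \<notin> C" "x < a"
  shows "\<exists>d<a. \<forall>c\<in>C. c < a \<longrightarrow> c \<le> d"
proof (cases "\<exists>c\<in>C. c < a")
  case False
  with assms(4) show ?thesis by blast
next
  case True
  with assms(1-3) obtain d where "d < a" "\<not> (\<exists>c\<in>C. d < c \<and> c < a)"
    unfolding closed_in_def by blast
  then show ?thesis by (meson not_le)
qed

lemma not_cofinal_mod_if_tails_in_ultrafilter:
  fixes \<kappa> :: "'o::wellorder" and A :: "'o set"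
  assumes "A \<subseteq> {..<\<kappa>}" "\<forall>a\<in>A. regular_cardinal a"
    and "club C \<kappa>" "A \<inter> C = {}"
    and "ultrafilter_on A D" "\<forall>c<\<kappa>. {a\<in>A. c < a} \<in> D"
    and "F \<subseteq> prodA A" "F \<approx> {..<\<kappa>}"
  shows "\<not> cofinal_mod A D F"
proof
  assume cof: "cofinal_mod A D F"
  obtain e where e: "bij_betw e {..<\<kappa>} F" using assms(8) eqpoll_sym unfolding eqpoll_def by blast
  have "\<exists>d<a. \<forall>c\<in>C. c < a \<longrightarrow> c \<le> d" if "a \<in> A" for a
    using closed_in_bounded_below_nonmember assms(1-4) regular_cardinal_nonzero that
    unfolding club_def by blast
  then obtain d where d: "\<forall>a\<in>A. d a < a" and dC: "\<forall>a\<in>A. \<forall>c\<in>C. c < a \<longrightarrow> c \<le> d a"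
    by metis
  have "e i a < a" if "a \<in> A" "i \<le> d a" for a i
  proof -
    have "i < \<kappa>" using that d assms(1) by fastforce
    then have "e i \<in> prodA A" using e assms(7) bij_betwE by blast
    with that show ?thesis unfolding prodA_def by auto
  qed
  then obtain g where g: "g \<in> prodA A" and below_g: "\<forall>a\<in>A. \<forall>i\<le>d a. e i a < g a"
    using prodA_dominates_short_families[OF assms(2) d] by blast
  obtain i where i: "i < \<kappa>" and le: "le_mod A D g (e i)"
    using cof g e unfolding cofinal_mod_def bij_betw_def by auto
  obtain c where c: "c \<in> C" "i \<le> c" "c < \<kappa>"
    using assms(3) i unfolding club_def unbounded_in_def by blast
  have "e i a < g a" if "a \<in> A" "c < a" for a
  proof -
    have "i \<le> d a" using dC c that order.trans[of i c] by (meson less_imp_le)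
    with below_g that show ?thesis by blast
  qed
  then have "{a\<in>A. c < a} \<inter> {a\<in>A. g a \<le> e i a} = {}" by (auto simp flip: not_less)
  moreover have "{a\<in>A. c < a} \<in> D" "{a\<in>A. g a \<le> e i a} \<in> D"
    using assms(6) c(3) le unfolding le_mod_def by auto
  ultimately show False using ultrafilter_onD(2,3)[OF assms(5)] by metis
qed

theorem lemma4p4:
  fixes \<kappa> :: "'o::wellorder" and A :: "'o set"
  assumes "strongly_inaccessible \<kappa>"
    and "A \<subseteq> {..<\<kappa>}"
    and "\<forall>a\<in>A. regular_cardinal a"
    and "\<not> stationary A \<kappa>"
    and "unbounded_in A \<kappa>"
  shows "\<kappa> \<notin> pcf A"
proof
  assume "\<kappa> \<in> pcf A"
  then obtain D where D: "ultrafilter_on A D" and cf: "cf_is A D {..<\<kappa>}"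
    unfolding pcf_def by blast
  show False
  proof (cases "\<forall>c<\<kappa>. {a\<in>A. c < a} \<in> D")
    case False
    then obtain g where g: "g < \<kappa>" and "{a\<in>A. g < a} \<notin> D" by blast
    then have "A - {a\<in>A. g < a} \<in> D" by (intro ultrafilter_onD(5)[OF D]) auto
    moreover have "A - {a\<in>A. g < a} = {a\<in>A. a \<le> g}" by auto
    moreover have "prodA A \<noteq> {}"
      using assms(3) regular_cardinal_nonzero by (force simp: prodA_def PiE_eq_empty_iff)
    ultimately obtain F where "cofinal_mod A D F" "F \<prec> {..<\<kappa>}"
      using small_cofinal_family_if_bounded_set_in_ultrafilter[OF assms(1) g D] by auto
    with cf show False unfolding cf_is_def by blast
  next
    case True
    obtain C where C: "club C \<kappa>" "A \<inter> C = {}"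
      using assms(2,4) unfolding stationary_def by blast
    obtain F where F: "cofinal_mod A D F" "F \<approx> {..<\<kappa>}"
      using cf unfolding cf_is_def by blast
    then have "F \<subseteq> prodA A" unfolding cofinal_mod_def by blast
    with F show False
      using not_cofinal_mod_if_tails_in_ultrafilter[OF assms(2,3) C D True] by blast
  qed
qed

end
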